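(* Assume the Standing Setting below, let $\Omega$ be the set of limit points of $\{x_k\}_{k\ge0}$, and suppose $\mathcal{P}_\rho$ satisfies the KL property on $\Omega$. Then $\sum_{k=1}^\infty\|x_k-x_{k-1}\|<\infty$, and consequently $\{x_k\}_{k\ge0}$ converges to a critical point of $\mathcal{P}_\rho$.
   Context: Standing Setting. $f:\mathbb{R}^n\to\mathbb{R}$ and $F=(f_1,\dots,f_m)^T:\mathbb{R}^n\to\mathbb{R}^m$ are continuously differentiable; $\|\cdot\|$ is the Euclidean/spectral norm; $J_F(x)\in\mathbb{R}^{m\times n}$ is the Jacobian of $F$. The penalty function is $\mathcal{P}_\rho(x)=f(x)+\frac{\rho}{2}\|F(x)\|^2$ and $\bar{\mathcal{P}}_\rho(x;\bar x)=f(\bar x)+\langle\nabla f(\bar x),x-\bar x\rangle+\frac{\rho}{2}\|F(\bar x)+J_F(\bar x)(x-\bar x)\|^2$. Assumption 1: there is $\rho_0\ge0$ and a value for which the sublevel set $\{x: f(x)+\frac{\rho_0}{2}\|F(x)\|^2\le\cdot\}$ is nonempty and compact; $\bar L:=\inf_x\{f(x)+\frac{\rho_0}{2}\|F(x)\|^2\}$ (finite). Assumption 2 on a compact convex set $\mathcal{S}$: there are constants $L_f,M_F,L_F>0$ with $\|\nabla f(x)-\nabla f(y)\|\le L_f\|x-y\|$, $\|J_F(x)\|\le M_F$, $\|J_F(x)-J_F(y)\|\le L_F\|x-y\|$ for all $x,y\in\mathcal{S}$, and LICQ holds on $\mathcal{S}$ (i.e. $J_F(x)$ has full row rank for every $x\in\mathcal{S}$).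 Assumption 3: there is a finite $\bar\alpha$ with $f(x)\le\bar\alpha$ for all $x$ with $\|F(x)\|\le1$. Parameters: $\rho\ge\max\{1,3\rho_0\}$; $x_0$ satisfies $f(x_0)\le\bar\alpha$ and $\|F(x_0)\|^2\le\min\{1,2c_0/\rho\}$ for some $c_0>0$; $\alpha:=\bar\alpha+c_0$. LQP method: given $x_0$, $\underline\beta>0$, for $k=0,1,\dots$ choose $\beta_{k+1}\ge\underline\beta$ such that $x_{k+1}:=\arg\min_x\{\bar{\mathcal{P}}_\rho(x;x_k)+\frac{\beta_{k+1}}{2}\|x-x_k\|^2\}$ satisfies $\mathcal{P}_\rho(x_{k+1})\le\mathcal{P}_\rho(x_k)-\frac{\beta_{k+1}}{2}\|x_{k+1}-x_k\|^2$. It is assumed that all iterates $x_k$ lie in $\mathcal{S}$ and that $\underline\beta\le\beta_k\le\bar\beta<\infty$ for all $k\ge1$. Notation: $P_k=\mathcal{P}_\rho(x_k)$, $\Delta x_k=x_k-x_{k-1}$. KL property: for $\tau\in(0,\infty]$, $\Psi_\tau$ is the set of continuous concave $\varphi:[0,\tau]\to[0,\infty)$ with $\varphi(0)=0$, $\varphi$ continuously differentiable on $(0,\tau)$ and $\varphi'>0$ there. A continuously differentiable $\Phi$ taking a constant value on a set $\Omega$ satisfies the KL property on $\Omega$ if there exist $\epsilon>0$, $\tau>0$, $\varphi\in\Psi_\tau$ such that for every $x^*\in\Omega$ and every $x$ with $\mathrm{dist}(x,\Omega)<\epsilon$ and $\Phi(x^* )<\Phi(x)<\Phi(x^* )+\tau$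 one has $\varphi'(\Phi(x)-\Phi(x^* ))\,\|\nabla\Phi(x)\|\ge1$. "KL at a point $x^*$" means KL on $\Omega=\{x^*\}$. *)

theory Defs
  imports "HOL-Analysis.Analysis"
begin

definition gradient :: "('a::euclidean_space \<Rightarrow> real) \<Rightarrow> 'a \<Rightarrow> 'a" where
  "gradient \<Phi> x = (SOME g. (\<Phi> has_derivative (\<lambda>h. g \<bullet> h)) (at x))"

definition penalty :: "('a::euclidean_space \<Rightarrow> real) \<Rightarrow> ('a \<Rightarrow> 'b::euclidean_space) \<Rightarrow> real \<Rightarrow> 'a \<Rightarrow> real" where
  "penalty f F \<rho> x = f x + \<rho> / 2 * (norm (F x))\<^sup>2"

definition lin_penalty ::
  "('a::euclidean_space \<Rightarrow> real) \<Rightarrow> ('a \<Rightarrow> 'a) \<Rightarrow> ('a \<Rightarrow> 'b::euclidean_space) \<Rightarrow> ('a \<Rightarrow> ('a \<Rightarrow>\<^sub>L 'b))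
    \<Rightarrow> real \<Rightarrow> 'a \<Rightarrow> 'a \<Rightarrow> real" where
  "lin_penalty f gradf F JF \<rho> x xb =
     f xb + gradf xb \<bullet> (x - xb) + \<rho> / 2 * (norm (F xb + blinfun_apply (JF xb) (x - xb)))\<^sup>2"

definition Psi :: "real \<Rightarrow> (real \<Rightarrow> real) set" where
  "Psi \<tau> = {\<phi>. continuous_on {0..\<tau>} \<phi> \<and> concave_on {0..\<tau>} \<phi> \<and> \<phi> 0 = 0 \<and>
      (\<forall>s\<in>{0..\<tau>}. \<phi> s \<ge> 0) \<and>
      (\<forall>s\<in>{0<..<\<tau>}. \<phi> differentiable (at s) \<and> deriv \<phi> s > 0) \<and>
      continuous_on {0<..<\<tau>} (deriv \<phi>)}"

text \<open>KL property of \<Phi> on a set \<Omega> (uniformized form).\<close>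
definition KL_on :: "('a::euclidean_space \<Rightarrow> real) \<Rightarrow> 'a set \<Rightarrow> bool" where
  "KL_on \<Phi> \<Omega> \<longleftrightarrow> (\<exists>\<epsilon>>0. \<exists>\<tau>>0. \<exists>\<phi>\<in>Psi \<tau>.
      \<forall>xs\<in>\<Omega>. \<forall>x. infdist x \<Omega> < \<epsilon> \<and> \<Phi> xs < \<Phi> x \<and> \<Phi> x < \<Phi> xs + \<tau> \<longrightarrow>
        deriv \<phi> (\<Phi> x - \<Phi> xs) * norm (gradient \<Phi> x) \<ge> 1)"

definition limit_points :: "(nat \<Rightarrow> 'a::metric_space) \<Rightarrow> 'a set" where
  "limit_points x = {y. \<exists>r. strict_mono r \<and> (x \<circ> r) \<longlonglongrightarrow> y}"

end

theory Submission
  imports Defs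
begin

text \<open>The gradient of the penalty P is \<nabla>f + \<rho> J^T F. Comparing it at x(k+1) with the
  optimality condition of the LQP subproblem at x(k), the Lipschitz bounds on S give the relative
  error estimate |\<nabla>P(x(k+1))| \<le> C |x(k+1) - x(k)|, while the LQP step guarantees sufficient
  decrease a |x(k+1) - x(k)|^2 \<le> P(x(k)) - P(x(k+1)). P is constant, say P*, on the compact
  nonempty set of limit points, so for large k the KL inequality applies along the iterates; via
  concavity of \<phi> it yields the recursion 2 d(k+1) \<le> d(k) + (C/a)(\<phi>(P(x(k+1)) - P*) -
  \<phi>(P(x(k+2)) - P*)) for d(k) = |x(k+1) - x(k)|, which telescopes to finite length. Hence the
  iterates converge, and their limit is critical because \<nabla>P(x(k+1)) \<rightarrow> 0.
  Assumptions 1 and 3, LICQ and the conditions on x(0) serve in the paper only to keep the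
  iterates in S; here that is a hypothesis.\<close>

lemma gradient_eqI:
  fixes \<Phi> :: "'a::euclidean_space \<Rightarrow> real"
  assumes "(\<Phi> has_derivative (\<lambda>h. g \<bullet> h)) (at y)"
  shows "gradient \<Phi> y = g"
proof -
  have "(\<Phi> has_derivative (\<lambda>h. gradient \<Phi> y \<bullet> h)) (at y)"
    unfolding gradient_def using assms by (rule someI)
  then have "(\<lambda>h. gradient \<Phi> y \<bullet> h) = (\<lambda>h. g \<bullet> h)"
    using assms by (rule has_derivative_unique)
  then show ?thesis
    by (simp add: fun_eq_iff vector_eq_rdot)
qed

lemma adjoint_blinfun_apply_eq_sum:
  fixes A :: "'a::euclidean_space \<Rightarrow>\<^sub>L 'b::euclidean_space"
  shows "adjoint (blinfun_apply A) v = (\<Sum>b\<in>Basis. (A b \<bullet> v) *\<^sub>R b)"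
proof (rule fun_cong[OF adjoint_unique], intro allI)
  fix x :: 'a and w :: 'b
  have "A x \<bullet> w = A (\<Sum>b\<in>Basis. (x \<bullet> b) *\<^sub>R b) \<bullet> w"
    by (simp add: euclidean_representation)
  then show "A x \<bullet> w = x \<bullet> (\<Sum>b\<in>Basis. (A b \<bullet> w) *\<^sub>R b)"
    by (simp add: blinfun.sum_right blinfun.scaleR_right inner_sum_left inner_sum_right
        mult.commute inner_commute[of x])
qed

lemma linear_blinfun_apply: "linear (blinfun_apply A)"
  by (simp add: bounded_linear.linear bounded_linear_blinfun_apply)

lemma adjoint_blinfun_apply_inner:
  fixes A :: "'a::euclidean_space \<Rightarrow>\<^sub>L 'b::euclidean_space"
  shows "adjoint (blinfun_apply A) v \<bullet> h = v \<bullet> A h"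
  by (simp add: adjoint_clauses linear_blinfun_apply)

lemma adjoint_blinfun_apply_diff:
  fixes A B :: "'a::euclidean_space \<Rightarrow>\<^sub>L 'b::euclidean_space"
  shows "adjoint (blinfun_apply (A - B)) v = adjoint (blinfun_apply A) v - adjoint (blinfun_apply B) v"
    and "adjoint (blinfun_apply A) (v - w) = adjoint (blinfun_apply A) v - adjoint (blinfun_apply A) w"
  by (simp_all add: adjoint_blinfun_apply_eq_sum blinfun.diff_left inner_diff_left inner_diff_right
      scaleR_diff_left sum_subtractf)

lemma norm_adjoint_blinfun_apply_le:
  fixes A :: "'a::euclidean_space \<Rightarrow>\<^sub>L 'b::euclidean_space"
  shows "norm (adjoint (blinfun_apply A) v) \<le> norm A * norm v"
proof -
  let ?w = "adjoint (blinfun_apply A) v"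
  have "norm ?w ^ 2 = v \<bullet> A ?w"
    by (simp add: adjoint_blinfun_apply_inner power2_norm_eq_inner)
  also have "\<dots> \<le> norm v * (norm A * norm ?w)"
    using Cauchy_Schwarz_ineq2[of v "A ?w"] norm_blinfun[of A ?w]
    by (smt (verit) mult_left_mono norm_ge_zero)
  finally have "norm ?w * norm ?w \<le> (norm A * norm v) * norm ?w"
    by (simp add: power2_eq_square mult_ac)
  then show ?thesis
    by (cases "?w = 0") auto
qed

lemma continuous_on_adjoint_blinfun_apply:
  fixes A :: "'c::topological_space \<Rightarrow> 'a::euclidean_space \<Rightarrow>\<^sub>L 'b::euclidean_space"
  assumes "continuous_on T A" "continuous_on T v"
  shows "continuous_on T (\<lambda>y. adjoint (blinfun_apply (A y)) (v y))"
  unfolding adjoint_blinfun_apply_eq_sum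
  by (intro continuous_intros assms)

lemma has_derivative_penalty:
  assumes "(f has_derivative (\<lambda>h. g \<bullet> h)) (at y)"
    and "(F has_derivative blinfun_apply J) (at y)"
  shows "(penalty f F \<rho> has_derivative (\<lambda>h. (g + \<rho> *\<^sub>R adjoint (blinfun_apply J) (F y)) \<bullet> h)) (at y)"
proof -
  have "penalty f F \<rho> = (\<lambda>z. f z + \<rho> / 2 * (F z \<bullet> F z))"
    by (auto simp: penalty_def power2_norm_eq_inner fun_eq_iff)
  moreover have "((\<lambda>z. f z + \<rho> / 2 * (F z \<bullet> F z)) has_derivative
      (\<lambda>h. g \<bullet> h + \<rho> / 2 * (F y \<bullet> J h + J h \<bullet> F y))) (at y)"
    by (intro derivative_intros assms)
  ultimately show ?thesis
    by (simp add: inner_add_left adjoint_blinfun_apply_inner inner_commute[of "J _"])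
qed

lemma gradient_penalty:
  assumes "(f has_derivative (\<lambda>h. g \<bullet> h)) (at y)"
    and "(F has_derivative blinfun_apply J) (at y)"
  shows "gradient (penalty f F \<rho>) y = g + \<rho> *\<^sub>R adjoint (blinfun_apply J) (F y)"
  by (rule gradient_eqI[OF has_derivative_penalty[OF assms]])

lemma continuous_on_penalty:
  assumes "\<And>y. (f has_derivative (\<lambda>h. gradf y \<bullet> h)) (at y)"
    and "\<And>y. (F has_derivative blinfun_apply (JF y)) (at y)"
  shows "continuous_on UNIV (penalty f F \<rho>)"
  using has_derivative_continuous[OF has_derivative_penalty[OF assms]]
  by (simp add: continuous_at_imp_continuous_on)

lemma continuous_on_gradient_penalty:
  fixes JF :: "'a::euclidean_space \<Rightarrow> ('a \<Rightarrow>\<^sub>L 'b::euclidean_space)"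
  assumes "\<And>y. (f has_derivative (\<lambda>h. gradf y \<bullet> h)) (at y)" "continuous_on UNIV gradf"
    and "\<And>y. (F has_derivative blinfun_apply (JF y)) (at y)" "continuous_on UNIV JF"
  shows "continuous_on UNIV (gradient (penalty f F \<rho>))"
proof -
  have "continuous_on UNIV F"
    using has_derivative_continuous[OF assms(3)] by (simp add: continuous_at_imp_continuous_on)
  then have "continuous_on UNIV (\<lambda>y. gradf y + \<rho> *\<^sub>R adjoint (blinfun_apply (JF y)) (F y))"
    by (intro continuous_intros continuous_on_adjoint_blinfun_apply assms(2,4))
  moreover have "gradient (penalty f F \<rho>) = (\<lambda>y. gradf y + \<rho> *\<^sub>R adjoint (blinfun_apply (JF y)) (F y))"
    using gradient_penalty[OF assms(1) assms(3)] by blast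
  ultimately show ?thesis
    by simp
qed

lemma lin_penalty_prox_stationary:
  fixes JF :: "'a::euclidean_space \<Rightarrow> ('a \<Rightarrow>\<^sub>L 'b::euclidean_space)"
  assumes "\<And>y. lin_penalty f gradf F JF \<rho> x1 x0 + \<beta> / 2 * (norm (x1 - x0))\<^sup>2
                  \<le> lin_penalty f gradf F JF \<rho> y x0 + \<beta> / 2 * (norm (y - x0))\<^sup>2"
  shows "gradf x0 + \<rho> *\<^sub>R adjoint (blinfun_apply (JF x0)) (F x0 + JF x0 (x1 - x0))
           + \<beta> *\<^sub>R (x1 - x0) = 0"
    (is "?g = 0")
proof -
  define q where "q y = lin_penalty f gradf F JF \<rho> y x0 + \<beta> / 2 * (norm (y - x0))\<^sup>2" for y
  have q_eq: "q = (\<lambda>y. f x0 + gradf x0 \<bullet> (y - x0)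
      + \<rho> / 2 * ((F x0 + JF x0 (y - x0)) \<bullet> (F x0 + JF x0 (y - x0)))
      + \<beta> / 2 * ((y - x0) \<bullet> (y - x0)))"
    by (auto simp: fun_eq_iff q_def lin_penalty_def power2_norm_eq_inner)
  have "(q has_derivative (\<lambda>h. ?g \<bullet> h)) (at x1)"
    unfolding q_eq
    by (rule derivative_eq_intros refl | simp)+
      (auto simp: fun_eq_iff inner_add_left inner_add_right adjoint_blinfun_apply_inner
        adjoint_works[OF linear_blinfun_apply] inner_commute algebra_simps
        add_divide_distrib diff_divide_distrib)
  moreover have "\<forall>y\<in>UNIV. q x1 \<le> q y"
    using assms by (simp add: q_def)
  ultimately have "(\<lambda>h. ?g \<bullet> h) = (\<lambda>h. 0)"
    using differential_zero_maxmin[of x1 UNIV q] by auto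
  then show ?thesis
    by (metis inner_eq_zero_iff)
qed

lemma norm_diff_le_of_bounded_jacobian:
  fixes JF :: "'a::euclidean_space \<Rightarrow> ('a \<Rightarrow>\<^sub>L 'b::euclidean_space)"
  assumes "convex S" "x0 \<in> S" "x1 \<in> S"
    and F_deriv: "\<And>y. (F has_derivative blinfun_apply (JF y)) (at y)"
    and JF_bounded: "\<And>y. y \<in> S \<Longrightarrow> norm (JF y) \<le> M"
  shows "norm (F x1 - F x0) \<le> M * norm (x1 - x0)"
proof (rule differentiable_bound[OF assms(1) _ _ assms(3,2)])
  fix y assume "y \<in> S"
  show "(F has_derivative blinfun_apply (JF y)) (at y within S)"
    using F_deriv has_derivative_at_withinI by blast
  show "onorm (blinfun_apply (JF y)) \<le> M"
    using JF_bounded[OF \<open>y \<in> S\<close>] by (simp add: norm_blinfun.rep_eq)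
qed

lemma norm_gradient_after_prox_step_le:
  fixes JF :: "'a::euclidean_space \<Rightarrow> ('a \<Rightarrow>\<^sub>L 'b::euclidean_space)"
  assumes S: "convex S" "x0 \<in> S" "x1 \<in> S"
    and F_deriv: "\<And>y. (F has_derivative blinfun_apply (JF y)) (at y)"
    and gradf_Lipschitz: "\<And>y z. y \<in> S \<Longrightarrow> z \<in> S \<Longrightarrow> norm (gradf y - gradf z) \<le> Lf * norm (y - z)"
    and JF_bounded: "\<And>y. y \<in> S \<Longrightarrow> norm (JF y) \<le> MF"
    and JF_Lipschitz: "\<And>y z. y \<in> S \<Longrightarrow> z \<in> S \<Longrightarrow> norm (JF y - JF z) \<le> LF * norm (y - z)"
    and F_bounded: "norm (F x1) \<le> B"
    and \<beta>: "0 \<le> \<beta>" "\<beta> \<le> \<beta>up" and \<rho>: "0 \<le> \<rho>"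
    and stationary: "gradf x0 + \<rho> *\<^sub>R adjoint (blinfun_apply (JF x0)) (F x0 + JF x0 (x1 - x0))
                       + \<beta> *\<^sub>R (x1 - x0) = 0"
  shows "norm (gradf x1 + \<rho> *\<^sub>R adjoint (blinfun_apply (JF x1)) (F x1))
           \<le> (Lf + \<rho> * (B * LF + 2 * MF * MF) + \<beta>up) * norm (x1 - x0)"
proof -
  define d where "d = x1 - x0"
  define adj where "adj y v = adjoint (blinfun_apply (JF y)) v" for y v
  define r where "r = F x1 - F x0 - JF x0 d"
  have MF: "0 \<le> MF"
    using JF_bounded[OF S(2)] norm_ge_zero order_trans by blast
  have F_Lipschitz: "norm (F x1 - F x0) \<le> MF * norm d"
    unfolding d_def by (rule norm_diff_le_of_bounded_jacobian[OF S F_deriv JF_bounded])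
  have "norm (JF x0 d) \<le> MF * norm d"
    using norm_blinfun[of "JF x0" d] JF_bounded[OF S(2)] by (smt (verit) mult_right_mono norm_ge_zero)
  then have r_bound: "norm r \<le> 2 * MF * norm d"
    using F_Lipschitz norm_triangle_ineq4[of "F x1 - F x0" "JF x0 d"] unfolding r_def by linarith
  have "gradf x1 + \<rho> *\<^sub>R adj x1 (F x1)
      = (gradf x1 - gradf x0) + \<rho> *\<^sub>R adjoint (blinfun_apply (JF x1 - JF x0)) (F x1)
        + \<rho> *\<^sub>R adj x0 r - \<beta> *\<^sub>R d"
    \<comment> \<open>subtract the stationarity condition of the subproblem at x0\<close>
    using stationary
    by (simp add: adj_def r_def d_def adjoint_blinfun_apply_diff algebra_simps)
  also have "norm \<dots> \<le> norm (gradf x1 - gradf x0)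
      + \<rho> * norm (adjoint (blinfun_apply (JF x1 - JF x0)) (F x1)) + \<rho> * norm (adj x0 r)
      + norm (\<beta> *\<^sub>R d)"
    using \<rho> by (smt (verit) norm_scaleR norm_triangle_ineq norm_triangle_ineq4)
  also have "\<dots> \<le> Lf * norm d + \<rho> * ((LF * norm d) * B) + \<rho> * (MF * (2 * MF * norm d))
      + \<beta>up * norm d"
  proof -
    have "norm (gradf x1 - gradf x0) \<le> Lf * norm d"
      using gradf_Lipschitz[OF S(3) S(2)] by (simp add: d_def)
    moreover have "norm (adjoint (blinfun_apply (JF x1 - JF x0)) (F x1)) \<le> (LF * norm d) * B"
      using norm_adjoint_blinfun_apply_le[of "JF x1 - JF x0" "F x1"] JF_Lipschitz[OF S(3) S(2)]
        F_bounded unfolding d_def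
      by (smt (verit) mult_mono norm_ge_zero)
    moreover have "norm (adj x0 r) \<le> MF * (2 * MF * norm d)"
      using norm_adjoint_blinfun_apply_le[of "JF x0" r] JF_bounded[OF S(2)] r_bound MF
      unfolding adj_def by (smt (verit) mult_mono norm_ge_zero)
    moreover have "norm (\<beta> *\<^sub>R d) \<le> \<beta>up * norm d"
      using \<beta> by (simp add: mult_right_mono)
    ultimately show ?thesis
      using \<rho> by (smt (verit) mult_left_mono)
  qed
  also have "\<dots> = (Lf + \<rho> * (B * LF + 2 * MF * MF) + \<beta>up) * norm d"
    by (simp add: algebra_simps)
  finally show ?thesis
    by (simp add: adj_def d_def)
qed

lemma LQP_relative_error:
  fixes JF :: "'a::euclidean_space \<Rightarrow> ('a \<Rightarrow>\<^sub>L 'b::euclidean_space)" and x :: "nat \<Rightarrow> 'a"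
  assumes S: "compact S" "convex S" "\<And>k. x k \<in> S"
    and f_deriv: "\<And>y. (f has_derivative (\<lambda>h. gradf y \<bullet> h)) (at y)"
    and F_deriv: "\<And>y. (F has_derivative blinfun_apply (JF y)) (at y)"
    and Lipschitz: "\<And>y z. y \<in> S \<Longrightarrow> z \<in> S \<Longrightarrow> norm (gradf y - gradf z) \<le> Lf * norm (y - z)"
      "\<And>y. y \<in> S \<Longrightarrow> norm (JF y) \<le> MF"
      "\<And>y z. y \<in> S \<Longrightarrow> z \<in> S \<Longrightarrow> norm (JF y - JF z) \<le> LF * norm (y - z)"
    and "0 \<le> Lf" "0 \<le> LF" "0 \<le> \<rho>" "\<And>k. 0 \<le> \<beta> (Suc k)" "\<And>k. \<beta> (Suc k) \<le> \<beta>up"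
    and step_min: "\<And>k y. lin_penalty f gradf F JF \<rho> (x (Suc k)) (x k) + \<beta> (Suc k) / 2 * (norm (x (Suc k) - x k))\<^sup>2
                       \<le> lin_penalty f gradf F JF \<rho> y (x k) + \<beta> (Suc k) / 2 * (norm (y - x k))\<^sup>2"
  obtains C where "0 \<le> C"
    "\<And>k. norm (gradient (penalty f F \<rho>) (x (Suc k))) \<le> C * norm (x (Suc k) - x k)"
proof -
  have "bounded (F ` S)"
    using has_derivative_continuous[OF F_deriv] S(1)
    by (intro compact_imp_bounded compact_continuous_image continuous_at_imp_continuous_on) auto
  then obtain B where "\<forall>z\<in>F ` S. norm z \<le> B"
    unfolding bounded_iff by blast
  then have B: "\<And>y. y \<in> S \<Longrightarrow> norm (F y) \<le> B"
    by simp
  show thesis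
  proof (rule that)
    have "0 \<le> B" "0 \<le> MF" "0 \<le> \<beta>up"
        using norm_ge_zero[of "F (x 0)"] B[OF S(3)[of 0]] norm_ge_zero[of "JF (x 0)"]
        Lipschitz(2)[OF S(3)[of 0]] assms(12,13)[of 0] by linarith+
    then show "0 \<le> Lf + \<rho> * (B * LF + 2 * MF * MF) + \<beta>up"
      using assms(9-11) by simp
    show "norm (gradient (penalty f F \<rho>) (x (Suc k)))
        \<le> (Lf + \<rho> * (B * LF + 2 * MF * MF) + \<beta>up) * norm (x (Suc k) - x k)" for k
      unfolding gradient_penalty[OF f_deriv F_deriv]
      by (rule norm_gradient_after_prox_step_le[OF S(2) S(3)[of k] S(3)[of "Suc k"] F_deriv Lipschitz
            B[OF S(3)] assms(12,13) \<open>0 \<le> \<rho>\<close> lin_penalty_prox_stationary[OF step_min]])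
        simp_all
  qed
qed

lemma Psi_deriv_mult_le:
  assumes "\<phi> \<in> Psi \<tau>" "s \<in> {0<..<\<tau>}" "t \<in> {0..\<tau>}"
  shows "deriv \<phi> s * (s - t) \<le> \<phi> s - \<phi> t"
proof -
  have "convex_on {0..\<tau>} (\<lambda>x. - \<phi> x)"
    using assms(1) unfolding Psi_def concave_on_def by blast
  moreover have "\<phi> differentiable (at s)"
    using assms(1,2) unfolding Psi_def by blast
  then have "(\<phi> has_real_derivative deriv \<phi> s) (at s)"
    by (simp add: DERIV_deriv_iff_real_differentiable)
  then have "((\<lambda>x. - \<phi> x) has_real_derivative - deriv \<phi> s) (at s within {0..\<tau>})"
    by (rule DERIV_minus[OF has_field_derivative_at_within])
  moreover have "s \<in> interior {0..\<tau>}"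
    using assms(2) by simp
  ultimately have "- deriv \<phi> s * (t - s) \<le> - \<phi> t - - \<phi> s"
    using convex_on_imp_above_tangent[OF _ connected_Icc _ assms(3)] by blast
  then show ?thesis
    by (simp add: algebra_simps)
qed

lemma two_mult_le_add_of_square_le:
  fixes u v w :: real
  assumes "w\<^sup>2 \<le> u * v" "0 \<le> v" "0 \<le> u" "0 \<le> w"
  shows "2 * w \<le> u + v"
proof (rule power2_le_imp_le)
  have "(2 * w)\<^sup>2 \<le> 4 * (u * v)"
    using assms(1) by simp
  also have "\<dots> \<le> (u + v)\<^sup>2"
    using sum_squares_ge_zero[of "u - v" 0] by (simp add: power2_eq_square algebra_simps)
  finally show "(2 * w)\<^sup>2 \<le> (u + v)\<^sup>2" .
qed (use assms in simp)

lemma KL_step_bound: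
  fixes d0 d1 :: real
  assumes \<phi>: "\<phi> \<in> Psi \<tau>" and st: "0 \<le> t" "t \<le> s" "s < \<tau>"
    and "0 < a" "0 \<le> d0" "0 \<le> d1"
    and descent: "a * d1\<^sup>2 \<le> s - t"
    and KL: "0 < s \<Longrightarrow> 1 \<le> deriv \<phi> s * (C * d0)"
  shows "2 * d1 \<le> d0 + C / a * (\<phi> s - \<phi> t)"
proof (cases "s = 0")
  case True
  with st descent \<open>0 < a\<close> have "d1 = 0"
    by (simp add: mult_le_0_iff)
  with True st \<open>0 \<le> d0\<close> show ?thesis
    by simp
next
  case False
  with st have s: "s \<in> {0<..<\<tau>}" by simp
  then have deriv_pos: "0 < deriv \<phi> s"
    using \<phi> unfolding Psi_def by blast
  have tangent: "deriv \<phi> s * (s - t) \<le> \<phi> s - \<phi> t"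
    using Psi_deriv_mult_le[OF \<phi> s] st by simp
  have KL_s: "1 \<le> deriv \<phi> s * (C * d0)"
    using KL s by simp
  then have Cd0: "0 < C * d0"
    using deriv_pos zero_less_mult_pos[of "deriv \<phi> s" "C * d0"] by linarith
  have "a * d1\<^sup>2 \<le> (s - t) * (deriv \<phi> s * (C * d0))"
    using descent mult_left_mono[OF KL_s, of "s - t"] st by simp
  also have "\<dots> \<le> (\<phi> s - \<phi> t) * (C * d0)"
    using mult_right_mono[OF tangent less_imp_le[OF Cd0]] by (simp add: mult_ac)
  finally have "d1\<^sup>2 \<le> d0 * (C / a * (\<phi> s - \<phi> t))"
    using \<open>0 < a\<close> by (simp add: field_simps)
  moreover have "0 \<le> C / a * (\<phi> s - \<phi> t)"
  proof -
    have "0 \<le> \<phi> s - \<phi> t"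
      using tangent deriv_pos st by (smt (verit) mult_nonneg_nonneg)
    moreover have "0 < C"
      using Cd0 \<open>0 \<le> d0\<close> zero_less_mult_pos2 by fastforce
    ultimately show ?thesis
      using \<open>0 < a\<close> by simp
  qed
  ultimately show ?thesis
    using \<open>0 \<le> d0\<close> \<open>0 \<le> d1\<close> by (rule two_mult_le_add_of_square_le)
qed

lemma summable_of_telescoping_bound:
  fixes d e :: "nat \<Rightarrow> real"
  assumes step: "\<And>k. k \<ge> K \<Longrightarrow> 2 * d (Suc k) \<le> d k + (e k - e (Suc k))"
    and e_nonneg: "\<And>k. k \<ge> K \<Longrightarrow> 0 \<le> e k"
    and d_nonneg: "\<And>k. 0 \<le> d k"
  shows "summable d"
proof -
  define c where "c n = d (n + K) + e (n + K)" for n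
  have c_step: "d (Suc (n + K)) \<le> c n - c (Suc n)" for n
    using step[of "n + K"] by (simp add: c_def)
  have "decseq c"
  proof (rule decseq_SucI)
    show "c (Suc n) \<le> c n" for n
      using c_step[of n] d_nonneg[of "Suc (n + K)"] by linarith
  qed
  moreover have "\<And>n. 0 \<le> c n"
    using d_nonneg e_nonneg by (simp add: c_def add_nonneg_nonneg)
  ultimately obtain L where "c \<longlonglongrightarrow> L"
    using decseq_convergent by blast
  then have "summable (\<lambda>n. c n - c (Suc n))"
    using telescope_summable' by blast
  then have "summable (\<lambda>n. d (Suc (n + K)))"
    by (rule summable_comparison_test') (use c_step d_nonneg in simp)
  then show ?thesis
    using summable_iff_shift[of d "Suc K"] by simp
qed

lemma limit_points_nonempty:
  assumes "compact S" "\<And>k. x k \<in> S"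
  shows "limit_points x \<noteq> {}"
  using compact_imp_seq_compact[OF assms(1)] assms(2)
  by (auto simp: limit_points_def elim!: seq_compactE)

lemma limit_points_value:
  fixes P :: "'a::metric_space \<Rightarrow> 'b::t2_space"
  assumes "continuous_on UNIV P" "(\<lambda>k. P (x k)) \<longlonglongrightarrow> L" "y \<in> limit_points x"
  shows "P y = L"
proof -
  obtain r where r: "strict_mono r" "(x \<circ> r) \<longlonglongrightarrow> y"
    using assms(3) unfolding limit_points_def by blast
  have "(\<lambda>n. P (x (r n))) \<longlonglongrightarrow> P y"
    using continuous_on_tendsto_compose[OF assms(1) r(2)] by (simp add: o_def)
  moreover have "(\<lambda>n. P (x (r n))) \<longlonglongrightarrow> L"
    using LIMSEQ_subseq_LIMSEQ[OF assms(2) r(1)] by (simp add: o_def)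
  ultimately show ?thesis
    by (rule LIMSEQ_unique)
qed

lemma eventually_infdist_limit_points_less:
  assumes "compact S" "\<And>k. x k \<in> S" "0 < \<epsilon>"
  shows "\<forall>\<^sub>F k in sequentially. infdist (x k) (limit_points x) < \<epsilon>"
proof (rule ccontr)
  assume "\<not> ?thesis"
  then have "\<exists>\<^sub>F k in cofinite. \<not> infdist (x k) (limit_points x) < \<epsilon>"
    by (simp add: not_eventually cofinite_eq_sequentially)
  then have "infinite {k. \<not> infdist (x k) (limit_points x) < \<epsilon>}"
    by (simp add: frequently_cofinite)
  from infinite_enumerate[OF this] obtain r :: "nat \<Rightarrow> nat"
    where r: "strict_mono r" "\<And>n. r n \<in> {k. \<not> infdist (x k) (limit_points x) < \<epsilon>}"
    by blast
  then have far: "\<epsilon> \<le> infdist (x (r n)) (limit_points x)" for n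
    using not_less by blast
  have "\<forall>n. (x \<circ> r) n \<in> S"
    using assms(2) by simp
  then obtain l s where "l \<in> S" and s: "strict_mono s" and lim: "((x \<circ> r) \<circ> s) \<longlonglongrightarrow> l"
    by (rule seq_compactE[OF compact_imp_seq_compact[OF assms(1)]])
  have "strict_mono (r \<circ> s)"
    using r(1) s by (rule strict_mono_o)
  with lim have l: "l \<in> limit_points x"
    unfolding limit_points_def by (auto simp: o_assoc)
  obtain n where "dist (x (r (s n))) l < \<epsilon>"
    using lim assms(3) unfolding LIMSEQ_def by auto
  then show False
    using infdist_le[OF l, of "x (r (s n))"] far[of "s n"] by linarith
qed

lemma KL_along_iterates:
  fixes P :: "'a::euclidean_space \<Rightarrow> real" and x :: "nat \<Rightarrow> 'a"
  assumes P_cont: "continuous_on UNIV P" and S: "compact S" "\<And>k. x k \<in> S"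
    and P_lim: "(\<lambda>k. P (x k)) \<longlonglongrightarrow> L"
    and KL: "KL_on P (limit_points x)"
  obtains \<phi> \<tau> K where "\<phi> \<in> Psi \<tau>" "\<And>k. k \<ge> K \<Longrightarrow> P (x k) < L + \<tau>"
    "\<And>k. k \<ge> K \<Longrightarrow> L < P (x k) \<Longrightarrow> 1 \<le> deriv \<phi> (P (x k) - L) * norm (gradient P (x k))"
proof -
  define \<Omega> where "\<Omega> = limit_points x"
  obtain \<epsilon> \<tau> \<phi> where "0 < \<epsilon>" "0 < \<tau>" and \<phi>: "\<phi> \<in> Psi \<tau>"
    and KL_ineq: "\<And>y z. y \<in> \<Omega> \<Longrightarrow> infdist z \<Omega> < \<epsilon> \<Longrightarrow> P y < P z \<Longrightarrow> P z < P y + \<tau> \<Longrightarrow>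
      1 \<le> deriv \<phi> (P z - P y) * norm (gradient P z)"
    using KL unfolding KL_on_def \<Omega>_def by blast
  obtain y where y: "y \<in> \<Omega>"
    using limit_points_nonempty[of S x, OF S] unfolding \<Omega>_def by blast
  have Py: "P y = L"
    using limit_points_value[OF P_cont P_lim] y unfolding \<Omega>_def by blast
  have "\<forall>\<^sub>F k in sequentially. infdist (x k) \<Omega> < \<epsilon> \<and> P (x k) < L + \<tau>"
    using eventually_infdist_limit_points_less[of S x, OF S \<open>0 < \<epsilon>\<close>] order_tendstoD(2)[OF P_lim]
      \<open>0 < \<tau>\<close> unfolding \<Omega>_def by (auto intro: eventually_conj)
  then obtain K where K: "\<And>k. k \<ge> K \<Longrightarrow> infdist (x k) \<Omega> < \<epsilon> \<and> P (x k) < L + \<tau>"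
    unfolding eventually_sequentially by blast
  show thesis
  proof (rule that[OF \<phi>])
    show "P (x k) < L + \<tau>" if "k \<ge> K" for k
      using K[OF that] by blast
    show "1 \<le> deriv \<phi> (P (x k) - L) * norm (gradient P (x k))" if "k \<ge> K" "L < P (x k)" for k
      using KL_ineq[OF y, of "x k"] K[OF that(1)] that(2) Py by simp
  qed
qed

lemma KL_finite_length:
  fixes P :: "'a::euclidean_space \<Rightarrow> real" and x :: "nat \<Rightarrow> 'a"
  assumes P_cont: "continuous_on UNIV P" and S: "compact S" "\<And>k. x k \<in> S"
    and "0 < a" "0 \<le> C"
    and descent: "\<And>k. a * (norm (x (Suc k) - x k))\<^sup>2 \<le> P (x k) - P (x (Suc k))"
    and rel_error: "\<And>k. norm (gradient P (x (Suc k))) \<le> C * norm (x (Suc k) - x k)"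
    and KL: "KL_on P (limit_points x)"
  shows "summable (\<lambda>k. norm (x (Suc k) - x k))"
proof -
  define d where "d k = norm (x (Suc k) - x k)" for k
  define L where "L = (INF k. P (x k))"
  have P_decr: "P (x (Suc k)) \<le> P (x k)" for k
    using descent[of k] \<open>0 < a\<close> zero_le_power2[of "norm (x (Suc k) - x k)"]
    by (smt (verit) mult_nonneg_nonneg)
  have "bdd_below (P ` S)"
    using compact_continuous_image[OF continuous_on_subset[OF P_cont] S(1)]
    by (simp add: compact_imp_bounded bounded_imp_bdd_below)
  then have bdd: "bdd_below (range (\<lambda>k. P (x k)))"
    by (rule bdd_below_mono) (use S(2) in auto)
  have P_lim: "(\<lambda>k. P (x k)) \<longlonglongrightarrow> L"
    unfolding L_def using bdd P_decr by (intro LIMSEQ_decseq_INF decseq_SucI)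
  have P_ge: "L \<le> P (x k)" for k
    unfolding L_def using bdd by (rule cINF_lower) simp
  obtain \<phi> \<tau> K where \<phi>: "\<phi> \<in> Psi \<tau>" and below_\<tau>: "\<And>k. k \<ge> K \<Longrightarrow> P (x k) < L + \<tau>"
    and KL_ineq: "\<And>k. k \<ge> K \<Longrightarrow> L < P (x k) \<Longrightarrow> 1 \<le> deriv \<phi> (P (x k) - L) * norm (gradient P (x k))"
    using KL_along_iterates[of P S x, OF P_cont S P_lim KL] by metis
  define e where "e k = C / a * \<phi> (P (x (Suc k)) - L)" for k
  have "2 * d (Suc k) \<le> d k + (e k - e (Suc k))" if "k \<ge> K" for k
  proof -
    define s where "s = P (x (Suc k)) - L"
    define t where "t = P (x (Suc (Suc k))) - L"
    have "s < \<tau>"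
      using below_\<tau>[of "Suc k"] that by (simp add: s_def)
    have "1 \<le> deriv \<phi> s * (C * d k)" if "0 < s"
    proof -
      have "1 \<le> deriv \<phi> s * norm (gradient P (x (Suc k)))"
        using KL_ineq[of "Suc k"] \<open>k \<ge> K\<close> \<open>0 < s\<close> by (simp add: s_def)
      moreover have "0 < deriv \<phi> s"
        using \<phi> \<open>0 < s\<close> \<open>s < \<tau>\<close> unfolding Psi_def by auto
      ultimately show ?thesis
        using mult_left_mono[OF rel_error[of k]] unfolding d_def by (smt (verit))
    qed
    moreover have "a * (d (Suc k))\<^sup>2 \<le> s - t"
      using descent[of "Suc k"] by (simp add: d_def s_def t_def)
    ultimately have "2 * d (Suc k) \<le> d k + C / a * (\<phi> s - \<phi> t)"
      using KL_step_bound[OF \<phi> _ _ \<open>s < \<tau>\<close> \<open>0 < a\<close>, of t "d k" "d (Suc k)" C]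
        P_ge[of "Suc (Suc k)"] P_decr[of "Suc k"]
      by (simp add: d_def s_def t_def)
    then show ?thesis
      by (simp add: e_def s_def t_def right_diff_distrib)
  qed
  moreover have "0 \<le> e k" if "k \<ge> K" for k
    using \<phi> below_\<tau>[of "Suc k"] that P_ge[of "Suc k"] \<open>0 < a\<close> \<open>0 \<le> C\<close>
    unfolding e_def Psi_def by auto
  moreover have "0 \<le> d k" for k
    by (simp add: d_def)
  ultimately show ?thesis
    unfolding d_def[symmetric] by (rule summable_of_telescoping_bound)
qed

lemma convergent_if_summable_norm_diff:
  fixes x :: "nat \<Rightarrow> 'a::banach"
  assumes "summable (\<lambda>k. norm (x (Suc k) - x k))"
  shows "convergent x"
proof -
  have "summable (\<lambda>k. x (Suc k) - x k)"
    using assms by (rule summable_norm_cancel)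
  then have "convergent (\<lambda>n. \<Sum>k<n. x (Suc k) - x k)"
    by (simp add: summable_iff_convergent)
  then show ?thesis
    by (simp add: sum_lessThan_telescope convergent_diff_const_right_iff)
qed

lemma critical_limit_of_finite_length:
  fixes x :: "nat \<Rightarrow> 'a::banach" and G :: "'a \<Rightarrow> 'b::real_normed_vector"
  assumes G_cont: "continuous_on UNIV G"
    and finite_length: "summable (\<lambda>k. norm (x (Suc k) - x k))"
    and G_bound: "\<And>k. norm (G (x (Suc k))) \<le> C * norm (x (Suc k) - x k)"
  shows "\<exists>xs. x \<longlonglongrightarrow> xs \<and> G xs = 0"
proof -
  obtain xs where lim: "x \<longlonglongrightarrow> xs"
    using convergent_if_summable_norm_diff[OF finite_length] unfolding convergent_def by blast
  have "G xs = 0"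
  proof (rule LIMSEQ_unique)
    show "(\<lambda>k. G (x (Suc k))) \<longlonglongrightarrow> G xs"
      using continuous_on_tendsto_compose[OF G_cont LIMSEQ_Suc[OF lim]] by simp
    have "\<forall>k. norm (G (x (Suc k))) \<le> C * norm (x (Suc k) - x k)"
      using G_bound by blast
    moreover have "(\<lambda>k. C * norm (x (Suc k) - x k)) \<longlonglongrightarrow> 0"
      using tendsto_mult_right_zero[OF summable_LIMSEQ_zero[OF finite_length]] .
    ultimately show "(\<lambda>k. G (x (Suc k))) \<longlonglongrightarrow> 0"
      by (rule Lim_null_comparison[OF always_eventually])
  qed
  with lim show ?thesis
    by blast
qed

theorem lemma7:
  fixes f :: "'a::euclidean_space \<Rightarrow> real" and gradf :: "'a \<Rightarrow> 'a"
    and F :: "'a \<Rightarrow> 'b::euclidean_space" and JF :: "'a \<Rightarrow> ('a \<Rightarrow>\<^sub>L 'b)"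
    and S :: "'a set" and x :: "nat \<Rightarrow> 'a" and \<beta> :: "nat \<Rightarrow> real"
    and \<rho> \<rho>0 c Lf MF LF \<alpha>bar c0 \<beta>low \<beta>up :: real
  assumes f_C1: "\<And>y. (f has_derivative (\<lambda>h. gradf y \<bullet> h)) (at y)" "continuous_on UNIV gradf"
    and F_C1: "\<And>y. (F has_derivative blinfun_apply (JF y)) (at y)" "continuous_on UNIV JF"
    \<comment> \<open>Assumption 1\<close>
    and A1: "\<rho>0 \<ge> 0" "{y. f y + \<rho>0 / 2 * (norm (F y))\<^sup>2 \<le> c} \<noteq> {}"
      "compact {y. f y + \<rho>0 / 2 * (norm (F y))\<^sup>2 \<le> c}"
    \<comment> \<open>Assumption 2\<close>
    and A2: "compact S" "convex S" "Lf > 0" "MF > 0" "LF > 0"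
      "\<And>y z. y \<in> S \<Longrightarrow> z \<in> S \<Longrightarrow> norm (gradf y - gradf z) \<le> Lf * norm (y - z)"
      "\<And>y. y \<in> S \<Longrightarrow> norm (JF y) \<le> MF"
      "\<And>y z. y \<in> S \<Longrightarrow> z \<in> S \<Longrightarrow> norm (JF y - JF z) \<le> LF * norm (y - z)"
      "\<And>y. y \<in> S \<Longrightarrow> surj (blinfun_apply (JF y))"
    \<comment> \<open>Assumption 3\<close>
    and A3: "\<And>y. norm (F y) \<le> 1 \<Longrightarrow> f y \<le> \<alpha>bar"
    \<comment> \<open>Parameters and initial point\<close>
    and rho: "\<rho> \<ge> max 1 (3 * \<rho>0)"
    and c0: "c0 > 0"
    and x0: "f (x 0) \<le> \<alpha>bar" "(norm (F (x 0)))\<^sup>2 \<le> min 1 (2 * c0 / \<rho>)"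
    \<comment> \<open>LQP iteration\<close>
    and beta_low: "\<beta>low > 0"
    and beta_bounds: "\<And>k. k \<ge> 1 \<Longrightarrow> \<beta>low \<le> \<beta> k \<and> \<beta> k \<le> \<beta>up"
    and step_min: "\<And>k y. lin_penalty f gradf F JF \<rho> (x (Suc k)) (x k) + \<beta> (Suc k) / 2 * (norm (x (Suc k) - x k))\<^sup>2
                       \<le> lin_penalty f gradf F JF \<rho> y (x k) + \<beta> (Suc k) / 2 * (norm (y - x k))\<^sup>2"
    and step_descent: "\<And>k. penalty f F \<rho> (x (Suc k))
                       \<le> penalty f F \<rho> (x k) - \<beta> (Suc k) / 2 * (norm (x (Suc k) - x k))\<^sup>2"
    and in_S: "\<And>k. x k \<in> S"
    \<comment> \<open>KL on the set of limit points\<close>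
    and KL: "KL_on (penalty f F \<rho>) (limit_points x)"
  shows "summable (\<lambda>k. norm (x (Suc k) - x k))
    \<and> (\<exists>xs. x \<longlonglongrightarrow> xs \<and> gradient (penalty f F \<rho>) xs = 0)"
proof -
  have \<beta>_range: "0 \<le> \<beta> (Suc k)" "\<beta> (Suc k) \<le> \<beta>up" "\<beta>low \<le> \<beta> (Suc k)" for k
    using beta_bounds[of "Suc k"] beta_low by auto
  obtain C where "0 \<le> C"
    and rel_error: "\<And>k. norm (gradient (penalty f F \<rho>) (x (Suc k))) \<le> C * norm (x (Suc k) - x k)"
    using LQP_relative_error[of S x f gradf F JF Lf MF LF \<rho> \<beta> \<beta>up] A2(1-2,6-8) in_S f_C1(1) F_C1(1)
      A2(3,5) rho \<beta>_range(1,2) step_min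
    by (smt (verit))
  have descent: "\<beta>low / 2 * (norm (x (Suc k) - x k))\<^sup>2
      \<le> penalty f F \<rho> (x k) - penalty f F \<rho> (x (Suc k))" for k
    using step_descent[of k] mult_right_mono[OF \<beta>_range(3)[of k], of "(norm (x (Suc k) - x k))\<^sup>2 / 2"]
    by simp
  have "summable (\<lambda>k. norm (x (Suc k) - x k))"
    using beta_low by (intro KL_finite_length[OF continuous_on_penalty[OF f_C1(1) F_C1(1)] A2(1) in_S _
        \<open>0 \<le> C\<close> descent rel_error KL]) simp
  moreover have "\<exists>xs. x \<longlonglongrightarrow> xs \<and> gradient (penalty f F \<rho>) xs = 0"
    by (rule critical_limit_of_finite_length[OF continuous_on_gradient_penalty[OF f_C1 F_C1]
          calculation rel_error])
  ultimately show ?thesis ..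
qed

end
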